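(* Let $M_m$ be a rotationally symmetric plane and $q\neq o$. If the geodesic $\gamma_q$ is escaping, then $m(r)>m(r_q)$ for all $r>r_q$, and $m'(r_q)>0$.
   Context: For a smooth function $m\colon[0,\infty)\to[0,\infty)$ with $m(0)=0$, $m'(0)=1$, $m>0$ on $(0,\infty)$ and smooth odd extension, $M_m$ is $\mathbb R^2$ with metric $dr^2+m(r)^2d\theta^2$ (polar coordinates $(r,\theta)$ about origin $o$). For $q\ne o$, $r_q$ is its $r$-coordinate and $\gamma_q\colon[0,\infty)\to M_m$ is the unit speed geodesic starting at $q$ in direction $\partial_\theta$. A geodesic is escaping if its image is unbounded. *)

theory Defs
  imports "HOL-Analysis.Analysis"
begin

definition smooth_fun :: "(real \<Rightarrow> real) \<Rightarrow> bool" where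
  "smooth_fun f \<longleftrightarrow> (\<forall>n x. ((deriv ^^ n) f) differentiable (at x))"

text \<open>Admissible warping function m, given by its (smooth) odd extension to the real line.\<close>
definition rot_sym_profile :: "(real \<Rightarrow> real) \<Rightarrow> bool" where
  "rot_sym_profile m \<longleftrightarrow> smooth_fun m \<and> m 0 = 0 \<and> deriv m 0 = 1 \<and>
     (\<forall>r>0. m r > 0) \<and> (\<forall>r. m (- r) = - m r)"

text \<open>Geodesic of the metric dr^2 + m(r)^2 dtheta^2 written in polar coordinates
  (r, theta) with velocities (rho, omega), on the time interval [0, infinity),
  staying away from the origin o (where polar coordinates are valid).\<close>
definition polar_geodesic ::
  "(real \<Rightarrow> real) \<Rightarrow> (real \<Rightarrow> real) \<Rightarrow> (real \<Rightarrow> real) \<Rightarrow> (real \<Rightarrow> real) \<Rightarrow> (real \<Rightarrow> real) \<Rightarrow> bool" where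
  "polar_geodesic m r \<theta> \<rho> \<omega> \<longleftrightarrow>
     (\<forall>t\<ge>0. r t > 0 \<and>
        (r has_real_derivative \<rho> t) (at t within {0..}) \<and>
        (\<theta> has_real_derivative \<omega> t) (at t within {0..}) \<and>
        (\<rho> has_real_derivative (m (r t) * deriv m (r t) * (\<omega> t)\<^sup>2)) (at t within {0..}) \<and>
        (\<omega> has_real_derivative (- 2 * deriv m (r t) / m (r t) * \<rho> t * \<omega> t)) (at t within {0..}))"

text \<open>gamma_q for q with polar coordinates (rq, thq), rq > 0: the unit speed geodesic
  starting at q in direction d/dtheta (whose unit vector is (1/m(rq)) d/dtheta).\<close>
definition is_gamma_q ::
  "(real \<Rightarrow> real) \<Rightarrow> real \<Rightarrow> real \<Rightarrow> (real \<Rightarrow> real) \<Rightarrow> (real \<Rightarrow> real) \<Rightarrow> (real \<Rightarrow> real) \<Rightarrow> (real \<Rightarrow> real) \<Rightarrow> bool" where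
  "is_gamma_q m rq thq r \<theta> \<rho> \<omega> \<longleftrightarrow>
     polar_geodesic m r \<theta> \<rho> \<omega> \<and> r 0 = rq \<and> \<theta> 0 = thq \<and> \<rho> 0 = 0 \<and> \<omega> 0 = 1 / m rq"

text \<open>Escaping: the image is unbounded, i.e. the distance r to o is unbounded.\<close>
definition escaping :: "(real \<Rightarrow> real) \<Rightarrow> bool" where
  "escaping r \<longleftrightarrow> \<not> bdd_above (r ` {0..})"

end

theory Submission
  imports Defs
begin

text \<open>Along a unit speed geodesic, Clairaut's relation \<open>m(r)\<^sup>2 \<omega> = m(r\<^sub>q)\<close> and energy
  conservation \<open>\<rho>\<^sup>2 + m(r)\<^sup>2 \<omega>\<^sup>2 = 1\<close> give \<open>\<rho>\<^sup>2 = 1 - m(r\<^sub>q)\<^sup>2 / m(r)\<^sup>2\<close>, so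
  \<open>m(r(t)) \<ge> m(r\<^sub>q)\<close> for all \<open>t\<close>. An escaping geodesic passes through every radius
  \<open>s \<ge> r\<^sub>q\<close>, hence \<open>m \<ge> m(r\<^sub>q)\<close> on \<open>[r\<^sub>q, \<infinity>)\<close>. If \<open>m(a) = m(r\<^sub>q)\<close> for some
  \<open>a \<ge> r\<^sub>q\<close>, then \<open>a\<close> is a minimum of \<open>m\<close> there and \<open>m'(a) = 0\<close>; near \<open>a\<close> this makes
  \<open>\<rho>\<^sup>2 = O((r - a)\<^sup>2)\<close>, and a Gronwall argument shows that the geodesic, once at radius \<open>a\<close>,
  stays there forever, contradicting escape.\<close>

lemma quadratic_bound_at_critical_point:
  fixes f f' f'' :: "real \<Rightarrow> real"
  assumes f': "\<And>x. (f has_real_derivative f' x) (at x)"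
    and f'': "\<And>x. (f' has_real_derivative f'' x) (at x)"
    and cont: "continuous_on UNIV f''"
    and crit: "f' a = 0"
  obtains L where "\<And>x. \<bar>x - a\<bar> \<le> 1 \<Longrightarrow> \<bar>f x - f a\<bar> \<le> L * (x - a)\<^sup>2"
proof -
  define S where "S = {a - 1..a + 1}"
  have "compact (f'' ` S)"
    unfolding S_def by (intro compact_continuous_image continuous_on_subset[OF cont]) auto
  then obtain L0 where L0: "\<And>z. z \<in> S \<Longrightarrow> \<bar>f'' z\<bar> \<le> L0"
    using compact_imp_bounded bounded_iff by (metis image_eqI real_norm_def)
  define L where "L = max L0 0"
  have f'_bound: "\<bar>f' x\<bar> \<le> L * \<bar>x - a\<bar>" if "x \<in> S" for x
  proof -
    have "norm (f' x - f' a) \<le> L * norm (x - a)"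
      using f'' L0 that
      by (intro field_differentiable_bound[where S=S and f'=f''])
         (auto simp: S_def L_def has_field_derivative_at_within intro: max.coboundedI1)
    then show ?thesis using crit by simp
  qed
  have "\<bar>f x - f a\<bar> \<le> L * (x - a)\<^sup>2" if x: "\<bar>x - a\<bar> \<le> 1" for x
  proof -
    define T where "T = {min a x..max a x}"
    have "norm (f x - f a) \<le> (L * \<bar>x - a\<bar>) * norm (x - a)"
    proof (rule field_differentiable_bound[where S=T and f'=f'])
      show "(f has_real_derivative f' z) (at z within T)" for z
        using f' by (auto simp: has_field_derivative_at_within)
      fix z assume z: "z \<in> T"
      then have "z \<in> S" using x unfolding T_def S_def by auto
      then have "\<bar>f' z\<bar> \<le> L * \<bar>z - a\<bar>" by (rule f'_bound)
      also have "\<dots> \<le> L * \<bar>x - a\<bar>"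
        using z unfolding T_def L_def by (intro mult_left_mono) auto
      finally show "norm (f' z) \<le> L * \<bar>x - a\<bar>" by simp
    qed (auto simp: T_def)
    then show ?thesis by (simp add: power2_eq_square mult.assoc)
  qed
  then show thesis by (rule that)
qed

text \<open>Uniqueness for \<open>r' = \<rho>\<close> with \<open>\<rho>\<^sup>2 \<le> C (r - a)\<^sup>2\<close>: \<open>(r - a)\<^sup>2 e\<^sup>-\<^sup>(\<^sup>1\<^sup>+\<^sup>C\<^sup>)\<^sup>t\<close>
  is non-increasing because \<open>2 (r - a) \<rho> \<le> (r - a)\<^sup>2 + \<rho>\<^sup>2\<close>.\<close>

lemma stays_at_if_deriv_sq_le:
  fixes r \<rho> :: "real \<Rightarrow> real"
  assumes cont: "continuous_on {t0..} r"
    and deriv: "\<And>t. t > t0 \<Longrightarrow> (r has_real_derivative \<rho> t) (at t)"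
    and bound: "\<And>t. t > t0 \<Longrightarrow> (\<rho> t)\<^sup>2 \<le> C * (r t - a)\<^sup>2"
    and start: "r t0 = a"
    and "t \<ge> t0"
  shows "r t = a"
proof -
  define h where "h t = (r t - a)\<^sup>2 * exp (- ((1 + C) * t))" for t
  have "h t \<le> h t0"
  proof (rule DERIV_nonpos_imp_decreasing_open[OF \<open>t \<ge> t0\<close>])
    show "continuous_on {t0..t} h"
      unfolding h_def by (intro continuous_intros continuous_on_subset[OF cont]) auto
    fix x assume x: "t0 < x" "x < t"
    let ?D = "exp (- ((1 + C) * x)) * (2 * (r x - a) * \<rho> x - (1 + C) * (r x - a)\<^sup>2)"
    have "(h has_real_derivative ?D) (at x)"
      unfolding h_def[abs_def] using deriv[OF x(1)]
      by (auto intro!: derivative_eq_intros simp: algebra_simps power2_eq_square)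
    moreover have "2 * (r x - a) * \<rho> x \<le> (r x - a)\<^sup>2 + (\<rho> x)\<^sup>2"
      using zero_le_power2[of "r x - a - \<rho> x"] by (simp add: power2_eq_square algebra_simps)
    then have "?D \<le> 0"
      using bound[OF x(1)] by (intro mult_nonneg_nonpos) (auto simp: algebra_simps)
    ultimately show "\<exists>y. (h has_real_derivative y) (at x) \<and> y \<le> 0" by blast
  qed
  moreover have "h t0 = 0" "h t \<ge> 0" unfolding h_def using start by auto
  ultimately show ?thesis unfolding h_def by simp
qed

lemma unbounded_continuous_attains:
  fixes r :: "real \<Rightarrow> real"
  assumes "continuous_on {0..} r" "\<not> bdd_above (r ` {0..})" "s \<ge> r 0"
  obtains u where "u \<ge> 0" "r u = s"
proof -
  obtain t where t: "t \<ge> 0" "r t > s"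
    using assms(2) unfolding bdd_above_def by (metis atLeast_iff imageE not_le)
  have "\<exists>u. 0 \<le> u \<and> u \<le> t \<and> r u = s"
    using assms t by (intro IVT') (auto intro: continuous_on_subset)
  then show thesis using that by auto
qed

lemma unbounded_continuous_not_eventually_const:
  fixes r :: "real \<Rightarrow> real"
  assumes "continuous_on {0..} r" "\<not> bdd_above (r ` {0..})" "t0 \<ge> 0"
  shows "\<not> (\<forall>t\<ge>t0. r t = a)"
proof
  assume const: "\<forall>t\<ge>t0. r t = a"
  have "r ` {0..} \<subseteq> insert a (r ` {0..t0})"
    using const by (force simp: not_le intro: less_imp_le)
  moreover have "bounded (insert a (r ` {0..t0}))"
    unfolding bounded_insert
    by (intro compact_imp_bounded compact_continuous_image continuous_on_subset[OF assms(1)]) auto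
  ultimately show False
    using assms(2) by (metis bounded_subset bounded_imp_bdd_above)
qed

lemma smooth_fun_has_real_derivative:
  assumes "smooth_fun f"
  shows "(f has_real_derivative deriv f x) (at x)"
    and "(deriv f has_real_derivative deriv (deriv f) x) (at x)"
    and "continuous_on S (deriv (deriv f))"
proof -
  have diff: "((deriv ^^ n) f) differentiable (at y)" for n y
    using assms unfolding smooth_fun_def by blast
  show "(f has_real_derivative deriv f x) (at x)"
    using diff[of 0] by (simp add: DERIV_deriv_iff_real_differentiable)
  show "(deriv f has_real_derivative deriv (deriv f) x) (at x)"
    using diff[of 1] by (simp add: DERIV_deriv_iff_real_differentiable)
  show "continuous_on S (deriv (deriv f))"
    using diff[of 2] by (intro continuous_at_imp_continuous_on)
      (simp add: numeral_2_eq_2 differentiable_imp_continuous_within)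
qed

lemma polar_geodesic_conserved:
  assumes geo: "polar_geodesic m r \<theta> \<rho> \<omega>"
    and m': "\<And>x. (m has_real_derivative deriv m x) (at x)"
    and m_pos: "\<And>x. x > 0 \<Longrightarrow> m x > 0"
  obtains k e where "\<And>t. t \<ge> 0 \<Longrightarrow> (m (r t))\<^sup>2 * \<omega> t = k"
    and "\<And>t. t \<ge> 0 \<Longrightarrow> (\<rho> t)\<^sup>2 + (m (r t))\<^sup>2 * (\<omega> t)\<^sup>2 = e"
proof -
  note geo_t = geo[unfolded polar_geodesic_def, rule_format]
  have mr: "((\<lambda>t. m (r t)) has_real_derivative deriv m (r t) * \<rho> t) (at t within {0..})"
    if "t \<ge> 0" for t
    using DERIV_chain2[OF m'] geo_t[OF that] by blast
  have "\<exists>k. \<forall>t\<in>{0..}. (m (r t))\<^sup>2 * \<omega> t = k"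
  proof (rule has_field_derivative_zero_constant)
    fix t :: real assume "t \<in> {0..}"
    then have t: "t \<ge> 0" by simp
    show "((\<lambda>t. (m (r t))\<^sup>2 * \<omega> t) has_real_derivative 0) (at t within {0..})"
      using mr[OF t] geo_t[OF t] m_pos
      by (auto intro!: derivative_eq_intros simp: field_simps power2_eq_square)
  qed simp
  moreover have "\<exists>e. \<forall>t\<in>{0..}. (\<rho> t)\<^sup>2 + (m (r t))\<^sup>2 * (\<omega> t)\<^sup>2 = e"
  proof (rule has_field_derivative_zero_constant)
    fix t :: real assume "t \<in> {0..}"
    then have t: "t \<ge> 0" by simp
    show "((\<lambda>t. (\<rho> t)\<^sup>2 + (m (r t))\<^sup>2 * (\<omega> t)\<^sup>2) has_real_derivative 0) (at t within {0..})"
      using mr[OF t] geo_t[OF t] m_pos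
      by (auto intro!: derivative_eq_intros simp: field_simps power2_eq_square)
  qed simp
  ultimately show thesis using that by auto
qed

locale gamma_q_geodesic =
  fixes m r \<theta> \<rho> \<omega> :: "real \<Rightarrow> real" and rq thq :: real
  assumes profile: "rot_sym_profile m"
    and rq_pos: "rq > 0"
    and gamma_q: "is_gamma_q m rq thq r \<theta> \<rho> \<omega>"
begin

lemma m_has_real_derivative: "(m has_real_derivative deriv m x) (at x)"
  using profile smooth_fun_has_real_derivative(1) unfolding rot_sym_profile_def by blast

lemma m_pos: "x > 0 \<Longrightarrow> m x > 0"
  using profile unfolding rot_sym_profile_def by blast

lemma geodesic: "polar_geodesic m r \<theta> \<rho> \<omega>"
  using gamma_q unfolding is_gamma_q_def by blast

lemma m_r_pos: "t \<ge> 0 \<Longrightarrow> m (r t) > 0"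
  using geodesic m_pos unfolding polar_geodesic_def by blast

lemma r_continuous: "continuous_on {0..} r"
  using geodesic unfolding polar_geodesic_def by (intro DERIV_continuous_on) blast

lemma r_has_real_derivative:
  assumes "t > 0"
  shows "(r has_real_derivative \<rho> t) (at t)"
proof -
  have "at t within {0..} = at t"
    using assms by (intro at_within_interior) simp
  then show ?thesis
    using geodesic assms unfolding polar_geodesic_def by (metis less_imp_le)
qed

lemma radial_speed_sq: "t \<ge> 0 \<Longrightarrow> (\<rho> t)\<^sup>2 = 1 - (m rq / m (r t))\<^sup>2"
proof -
  assume t: "t \<ge> 0"
  obtain k e where k: "\<And>t. t \<ge> 0 \<Longrightarrow> (m (r t))\<^sup>2 * \<omega> t = k"
    and e: "\<And>t. t \<ge> 0 \<Longrightarrow> (\<rho> t)\<^sup>2 + (m (r t))\<^sup>2 * (\<omega> t)\<^sup>2 = e"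
    using polar_geodesic_conserved[OF geodesic m_has_real_derivative m_pos] by blast
  have init: "r 0 = rq" "\<rho> 0 = 0" "\<omega> 0 = 1 / m rq" "m rq > 0"
    using gamma_q rq_pos m_pos unfolding is_gamma_q_def by auto
  have "k = m rq" "e = 1"
    using k[of 0] e[of 0] init by (auto simp: power2_eq_square)
  then have "\<omega> t = m rq / (m (r t))\<^sup>2"
    using k[OF t] m_r_pos[OF t] by (auto simp: field_simps)
  then have "(m (r t))\<^sup>2 * (\<omega> t)\<^sup>2 = (m rq / m (r t))\<^sup>2"
    using m_r_pos[OF t] by (simp add: power2_eq_square)
  then show ?thesis
    using e[OF t] \<open>e = 1\<close> by linarith
qed

lemma m_along_ge: "t \<ge> 0 \<Longrightarrow> m (r t) \<ge> m rq"
proof -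
  assume t: "t \<ge> 0"
  have "(m rq / m (r t))\<^sup>2 \<le> 1"
    using radial_speed_sq[OF t] zero_le_power2[of "\<rho> t"] by linarith
  then have "m rq / m (r t) \<le> 1"
    using m_pos[OF rq_pos] m_r_pos[OF t] by (simp add: power_le_one_iff)
  then show ?thesis using m_r_pos[OF t] by (simp add: divide_le_eq)
qed

text \<open>Since \<open>m \<ge> m(r\<^sub>q)\<close> along the geodesic, \<open>\<rho>\<^sup>2 = 1 - (m(r\<^sub>q)/m(r))\<^sup>2 \<le> 2 (m(r) - m(r\<^sub>q)) / m(r\<^sub>q)\<close>,
  which is quadratic in \<open>r - a\<close> at a critical point \<open>a\<close> of \<open>m\<close> on the level \<open>m(r\<^sub>q)\<close>.\<close>

lemma radial_speed_sq_le_at_critical_level: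
  assumes level: "m a = m rq" and crit: "deriv m a = 0"
  obtains C where "\<And>t. t \<ge> 0 \<Longrightarrow> (\<rho> t)\<^sup>2 \<le> C * (r t - a)\<^sup>2"
proof -
  have sm: "smooth_fun m" using profile unfolding rot_sym_profile_def by blast
  obtain L where L: "\<And>x. \<bar>x - a\<bar> \<le> 1 \<Longrightarrow> \<bar>m x - m a\<bar> \<le> L * (x - a)\<^sup>2"
    using quadratic_bound_at_critical_point[OF smooth_fun_has_real_derivative[OF sm] crit] by blast
  define c where "c = m rq"
  have c: "c > 0" using m_pos[OF rq_pos] unfolding c_def .
  define C where "C = max 1 (2 * L / c)"
  have "(\<rho> t)\<^sup>2 \<le> C * (r t - a)\<^sup>2" if t: "t \<ge> 0" for t
  proof (cases "\<bar>r t - a\<bar> \<le> 1")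
    case True
    define M where "M = m (r t)"
    have M: "M \<ge> c" using m_along_ge[OF t] unfolding M_def c_def .
    have "(\<rho> t)\<^sup>2 = (1 - c / M) * (1 + c / M)"
      using radial_speed_sq[OF t] unfolding M_def c_def by (simp add: power2_eq_square algebra_simps)
    also have "\<dots> \<le> (1 - c / M) * 2"
      using M c by (intro mult_left_mono) auto
    also have "\<dots> = 2 * (M - c) / M"
      using M c by (simp add: field_simps)
    also have "\<dots> \<le> 2 * (M - c) / c"
      using M c by (intro divide_left_mono) auto
    also have "\<dots> \<le> (2 * L / c) * (r t - a)\<^sup>2"
      using L[OF True] level M c unfolding M_def c_def by (simp add: divide_right_mono)
    also have "\<dots> \<le> C * (r t - a)\<^sup>2"
      unfolding C_def by (intro mult_right_mono) auto
    finally show ?thesis .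
  next
    case False
    then have "1 \<le> (r t - a)\<^sup>2"
      by (metis abs_le_square_iff abs_one linorder_le_cases one_power2)
    then have "1 \<le> C * (r t - a)\<^sup>2"
      unfolding C_def by (metis max.cobounded1 mult_mono' mult_1 zero_le_one)
    moreover have "(\<rho> t)\<^sup>2 \<le> 1"
      using radial_speed_sq[OF t] by simp
    ultimately show ?thesis by linarith
  qed
  then show thesis by (rule that)
qed

lemma stays_at_critical_level:
  assumes level: "m a = m rq" and crit: "deriv m a = 0"
    and "t0 \<ge> 0" "r t0 = a" "t \<ge> t0"
  shows "r t = a"
proof -
  obtain C where C: "\<And>t. t \<ge> 0 \<Longrightarrow> (\<rho> t)\<^sup>2 \<le> C * (r t - a)\<^sup>2"
    using radial_speed_sq_le_at_critical_level[OF level crit] by blast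
  have "continuous_on {t0..} r"
    using \<open>t0 \<ge> 0\<close> by (intro continuous_on_subset[OF r_continuous]) auto
  moreover have "(r has_real_derivative \<rho> s) (at s)" if "s > t0" for s
    using that \<open>t0 \<ge> 0\<close> by (intro r_has_real_derivative) simp
  moreover have "(\<rho> s)\<^sup>2 \<le> C * (r s - a)\<^sup>2" if "s > t0" for s
    using that \<open>t0 \<ge> 0\<close> by (intro C) simp
  ultimately show ?thesis
    using stays_at_if_deriv_sq_le \<open>r t0 = a\<close> \<open>t \<ge> t0\<close> by blast
qed

lemma escaping_attains:
  assumes "escaping r" "s \<ge> rq"
  obtains u where "u \<ge> 0" "r u = s"
proof (rule unbounded_continuous_attains[OF r_continuous])
  show "\<not> bdd_above (r ` {0..})" using assms(1) unfolding escaping_def .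
  show "s \<ge> r 0" using assms(2) gamma_q unfolding is_gamma_q_def by simp
qed (rule that)

lemma escaping_m_ge:
  assumes "escaping r" "s \<ge> rq"
  shows "m s \<ge> m rq"
proof -
  obtain u where "u \<ge> 0" "r u = s" using escaping_attains[OF assms] .
  then show ?thesis using m_along_ge[of u] by simp
qed

lemma escaping_not_critical_at_level:
  assumes "escaping r" "a \<ge> rq" "m a = m rq"
  shows "deriv m a \<noteq> 0"
proof
  assume "deriv m a = 0"
  obtain u where "u \<ge> 0" "r u = a" using escaping_attains assms(1,2) by blast
  then have "\<forall>t\<ge>u. r t = a"
    using stays_at_critical_level assms(3) \<open>deriv m a = 0\<close> by blast
  then show False
    using unbounded_continuous_not_eventually_const[OF r_continuous _ \<open>u \<ge> 0\<close>] assms(1)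
    unfolding escaping_def by auto
qed

end

theorem lemma3p2:
  fixes m r \<theta> \<rho> \<omega> :: "real \<Rightarrow> real" and rq thq :: real
  assumes "rot_sym_profile m"
    and "rq > 0"
    and "is_gamma_q m rq thq r \<theta> \<rho> \<omega>"
    and "escaping r"
  shows "(\<forall>s>rq. m s > m rq) \<and> deriv m rq > 0"
proof -
  interpret gamma_q_geodesic m r \<theta> \<rho> \<omega> rq thq
    using assms(1-3) by unfold_locales
  note m_ge = escaping_m_ge[OF assms(4)]
  note not_critical = escaping_not_critical_at_level[OF assms(4)]
  have "m s > m rq" if s: "s > rq" for s
  proof (rule ccontr)
    assume "\<not> m s > m rq"
    then have level: "m s = m rq" using m_ge[of s] s by simp
    have "deriv m s = 0"
      using m_ge level s by (intro DERIV_local_min[OF m_has_real_derivative, of "s - rq"]) auto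
    then show False using not_critical level s by simp
  qed
  moreover have "deriv m rq \<ge> 0"
  proof (rule ccontr)
    assume "\<not> deriv m rq \<ge> 0"
    then obtain d where "d > 0" "\<And>h. 0 < h \<Longrightarrow> h < d \<Longrightarrow> m (rq + h) < m rq"
      using DERIV_neg_dec_right[OF m_has_real_derivative] by (meson not_le)
    then have "m (rq + d / 2) < m rq" by simp
    then show False using m_ge[of "rq + d / 2"] \<open>d > 0\<close> by simp
  qed
  ultimately show ?thesis using not_critical[of rq] by force
qed

end
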